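(* Let $q>0$. There is no finite positive Borel measure $\mu$ on $\overline{\mathbb{D}}$ and constant $C>0$ such that $\|f\|_{\mathcal{B}}\le C\|f\|_{L^q(\overline{\mathbb{D}},\mu)}$ for all $f\in\mathcal{B}\cap C(\overline{\mathbb{D}})$. Consequently, the same holds with $\mathcal{B}$ replaced by $\mathrm{BMOA}(\mathbb{D})$ or by $H^\infty(\mathbb{D})$ (with their respective norms).
   Context: The Bloch space $\mathcal{B}$ consists of holomorphic $f$ on $\mathbb{D}$ with $\|f\|_{\mathcal{B}}=|f(0)|+\sup_{z\in\mathbb{D}}(1-|z|^2)|f'(z)|<\infty$. $\mathrm{BMOA}(\mathbb{D})$ consists of holomorphic $f$ on $\mathbb{D}$ (in $H^1$) with $\sup_I\frac1{|I|}\int_I|f(e^{it})-f_I|\,dt<\infty$, the supremum over arcs $I\subset\partial\mathbb{D}$ and $f_I=\frac1{|I|}\int_If$; $H^\infty(\mathbb{D})$ is the space of bounded holomorphic functions on $\mathbb{D}$ with the sup norm. *)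

theory Defs
  imports "HOL-Analysis.Analysis"
begin

definition finite_Borel_measure_on_closed_disc :: "complex measure \<Rightarrow> bool" where
  "finite_Borel_measure_on_closed_disc M \<longleftrightarrow>
     sets M = sets (restrict_space borel (cball (0::complex) 1)) \<and> finite_measure M"

text \<open>The L^q quasi-norm (q > 0) with respect to a measure on the closed disc.
  For the functions considered (continuous on the closed disc) the integral is finite.\<close>

definition Lq_norm :: "complex measure \<Rightarrow> real \<Rightarrow> (complex \<Rightarrow> complex) \<Rightarrow> real" where
  "Lq_norm M q f = (enn2real (\<integral>\<^sup>+ z. ennreal (cmod (f z) powr q) \<partial>M)) powr (1 / q)"

definition bloch_seminorm :: "(complex \<Rightarrow> complex) \<Rightarrow> real" where
  "bloch_seminorm f = (SUP z\<in>ball 0 1. (1 - (cmod z)\<^sup>2) * cmod (deriv f z))"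

definition bloch_norm :: "(complex \<Rightarrow> complex) \<Rightarrow> real" where
  "bloch_norm f = cmod (f 0) + bloch_seminorm f"

definition bloch_space :: "(complex \<Rightarrow> complex) set" where
  "bloch_space = {f. f holomorphic_on ball 0 1 \<and>
      bdd_above ((\<lambda>z. (1 - (cmod z)\<^sup>2) * cmod (deriv f z)) ` ball 0 1)}"

text \<open>BMOA, for functions continuous on the closed disc (whose boundary function is
  then simply t \<mapsto> f(e^{it})).  Arcs of the circle are parametrised as
  {e^{it} : a \<le> t \<le> a + l} with 0 < l \<le> 2\<pi>; |I| = l is the arc length
  and dt is arc-length measure.\<close>

definition arc_mean :: "(complex \<Rightarrow> complex) \<Rightarrow> real \<Rightarrow> real \<Rightarrow> complex" where
  "arc_mean f a l = integral {a..a+l} (\<lambda>t. f (cis t)) / of_real l"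

definition arc_oscillation :: "(complex \<Rightarrow> complex) \<Rightarrow> real \<Rightarrow> real \<Rightarrow> real" where
  "arc_oscillation f a l = integral {a..a+l} (\<lambda>t. cmod (f (cis t) - arc_mean f a l)) / l"

definition arcs :: "(real \<times> real) set" where
  "arcs = {(a, l). 0 < l \<and> l \<le> 2 * pi}"

definition bmoa_seminorm :: "(complex \<Rightarrow> complex) \<Rightarrow> real" where
  "bmoa_seminorm f = (SUP (a, l)\<in>arcs. arc_oscillation f a l)"

definition bmoa_norm :: "(complex \<Rightarrow> complex) \<Rightarrow> real" where
  "bmoa_norm f = cmod (f 0) + bmoa_seminorm f"

definition bmoa_cont :: "(complex \<Rightarrow> complex) set" where
  "bmoa_cont = {f. f holomorphic_on ball 0 1 \<and> continuous_on (cball 0 1) f \<and>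
      bdd_above ((\<lambda>(a, l). arc_oscillation f a l) ` arcs)}"

definition hinf_space :: "(complex \<Rightarrow> complex) set" where
  "hinf_space = {f. f holomorphic_on ball 0 1 \<and> bdd_above ((\<lambda>z. cmod (f z)) ` ball 0 1)}"

definition hinf_norm :: "(complex \<Rightarrow> complex) \<Rightarrow> real" where
  "hinf_norm f = (SUP z\<in>ball 0 1. cmod (f z))"

definition cont_closed_disc :: "(complex \<Rightarrow> complex) set" where
  "cont_closed_disc = {f. continuous_on (cball 0 1) f}"

definition reverse_Lq_estimate ::
  "(complex \<Rightarrow> complex) set \<Rightarrow> ((complex \<Rightarrow> complex) \<Rightarrow> real) \<Rightarrow> real \<Rightarrow> bool" where
  "reverse_Lq_estimate X N q \<longleftrightarrow>
     (\<exists>M C. finite_Borel_measure_on_closed_disc M \<and> C > 0 \<and>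
        (\<forall>f\<in>X \<inter> cont_closed_disc. N f \<le> C * Lq_norm M q f))"

end

theory Submission
  imports Defs
begin

text \<open>For \<open>|a| = 1\<close> the entire functions \<open>f\<^sub>n z = exp (n (cnj a * z - 1))\<close> peak at \<open>a\<close>:
  \<open>f\<^sub>n a = 1\<close>, while \<open>|f\<^sub>n z| \<le> exp (- |z - a|\<^sup>2 / 2) ^ n\<close> on the closed disc.  A finite measure
  has only countably many atoms, so \<open>a\<close> can be chosen with \<open>\<mu> {a} = 0\<close>; then the \<open>L\<^sup>q(\<mu>)\<close> norms
  of \<open>f\<^sub>n\<close> tend to \<open>0\<close> by dominated convergence.  Their Bloch, BMOA and \<open>H\<^sup>\<infinity>\<close> norms stay
  bounded below: \<open>|f\<^sub>n|\<close> and \<open>(1 - |z|\<^sup>2) |f\<^sub>n'|\<close> are at least \<open>1/e\<close> at \<open>(1 - 1/n) a\<close>, and on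
  the arc of length \<open>pi/n\<close> starting at \<open>a\<close> the boundary values of \<open>f\<^sub>n\<close> run from near \<open>1\<close>
  to near \<open>-1\<close>, which bounds the mean oscillation over that arc from below.\<close>

lemma norm_exp_diff_le:
  fixes u v :: complex
  assumes "Re u \<le> 0" "Re v \<le> 0"
  shows "cmod (exp u - exp v) \<le> cmod (u - v)"
proof -
  have "cmod (exp u - exp v) \<le> 1 * cmod (u - v)"
  proof (rule field_differentiable_bound[where S="{z. Re z \<le> 0}" and f'=exp])
    show "(exp has_field_derivative exp z) (at z within {z. Re z \<le> 0})" for z
      by (intro DERIV_subset[OF DERIV_exp]) auto
  qed (use assms in \<open>auto simp: convex_halfspace_Re_le\<close>)
  then show ?thesis by simp
qed

lemma norm_cis_minus_1_le: "cmod (cis t - 1) \<le> \<bar>t\<bar>"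
  using norm_exp_diff_le[of "\<i> * of_real t" 0] by (simp add: cis_conv_exp norm_mult)

lemma norm_cis_minus_1_minus_linear_le: "cmod (cis t - 1 - \<i> * of_real t) \<le> t\<^sup>2"
proof -
  let ?f = "\<lambda>z. exp (\<i> * z) - \<i> * z"
  have "cmod (?f (of_real t) - ?f 0) \<le> \<bar>t\<bar> * cmod (of_real t - 0)"
  proof (rule field_differentiable_bound[where S="closed_segment 0 (of_real t)"
        and f'="\<lambda>z. \<i> * (exp (\<i> * z) - exp 0)"])
    show "(?f has_field_derivative \<i> * (exp (\<i> * z) - exp 0)) (at z within closed_segment 0 (of_real t))" for z
      by (auto intro!: derivative_eq_intros simp: algebra_simps)
    show "cmod (\<i> * (exp (\<i> * z) - exp 0)) \<le> \<bar>t\<bar>" if "z \<in> closed_segment 0 (of_real t)" for z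
    proof -
      from that obtain s where s: "0 \<le> s" "s \<le> 1" "z = of_real (s * t)"
        unfolding closed_segment_def by (auto simp: scaleR_conv_of_real)
      have "cmod (\<i> * (exp (\<i> * z) - exp 0)) \<le> cmod (\<i> * z - 0)"
        unfolding norm_mult norm_ii mult_1 by (rule norm_exp_diff_le) (auto simp: s)
      also have "\<dots> = s * \<bar>t\<bar>" using s by (simp add: norm_mult abs_mult)
      also have "\<dots> \<le> \<bar>t\<bar>" using s by (simp add: mult_left_le_one_le)
      finally show ?thesis .
    qed
  qed auto
  moreover have "?f (of_real t) - ?f 0 = cis t - 1 - \<i> * of_real t"
    by (simp add: cis_conv_exp mult.commute)
  ultimately show ?thesis by (simp add: power2_eq_square algebra_simps)
qed

lemma (in finite_measure) exists_measure_singleton_eq_0: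
  assumes "uncountable S"
  shows "\<exists>a\<in>S. measure M {a} = 0"
  using countable_subset[OF _ countable_support, of S] assms by blast

lemma uncountable_unit_circle: "uncountable (sphere (0::complex) 1)"
  by (rule connected_uncountable[of _ 1 "-1"]) (auto intro: connected_sphere)

lemma Re_cnj_mult_le:
  assumes "cmod a = 1" "cmod z \<le> 1"
  shows "Re (cnj a * z) \<le> 1 - (cmod (z - a))\<^sup>2 / 2"
proof -
  have "(Re z)\<^sup>2 + (Im z)\<^sup>2 \<le> 1" "(Re a)\<^sup>2 + (Im a)\<^sup>2 = 1"
    using assms power_le_one[of "cmod z" 2] by (simp_all add: cmod_power2 flip: cmod_power2)
  moreover have "(cmod (z - a))\<^sup>2 = (Re z - Re a)\<^sup>2 + (Im z - Im a)\<^sup>2"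
    by (simp add: cmod_power2)
  ultimately show ?thesis by (simp add: power2_eq_square algebra_simps)
qed

lemma cnj_mult_self_eq_1: "cmod a = 1 \<Longrightarrow> cnj a * a = 1"
  using complex_norm_square[of a] by (simp add: mult.commute)

lemma Re_scaled_cis_minus_1_le_0: "Re (of_nat n * (cis s - 1)) \<le> 0"
  by (auto intro!: mult_nonneg_nonpos)

lemma norm_exp_scaled_cis_minus_1_sub_1_le:
  "cmod (exp (of_nat n * (cis s - 1)) - 1) \<le> real n * \<bar>s\<bar>"
proof -
  have "cmod (exp (of_nat n * (cis s - 1)) - exp 0) \<le> cmod (of_nat n * (cis s - 1) - 0)"
    by (rule norm_exp_diff_le[OF Re_scaled_cis_minus_1_le_0]) simp
  also have "\<dots> \<le> real n * \<bar>s\<bar>"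
    by (simp add: norm_mult mult_left_mono norm_cis_minus_1_le)
  finally show ?thesis by simp
qed

text \<open>Near \<open>s = pi / n\<close> the exponent \<open>n (cis s - 1) \<approx> i n s\<close> is close to \<open>i pi\<close>.\<close>
lemma norm_exp_scaled_cis_minus_1_add_1_le:
  "cmod (exp (of_nat n * (cis s - 1)) + 1) \<le> real n * s\<^sup>2 + \<bar>real n * s - pi\<bar>"
proof -
  let ?w = "of_nat n * (cis s - 1)"
  have "cmod (exp ?w - exp (\<i> * of_real pi)) \<le> cmod (?w - \<i> * of_real pi)"
    by (rule norm_exp_diff_le[OF Re_scaled_cis_minus_1_le_0]) simp
  also have "?w - \<i> * of_real pi
      = of_nat n * (cis s - 1 - \<i> * of_real s) + \<i> * of_real (real n * s - pi)"
    by (simp add: algebra_simps)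
  also have "cmod \<dots> \<le> real n * s\<^sup>2 + \<bar>real n * s - pi\<bar>"
  proof (rule order_trans[OF norm_triangle_ineq add_mono])
    show "cmod (of_nat n * (cis s - 1 - \<i> * of_real s)) \<le> real n * s\<^sup>2"
      by (simp add: norm_mult mult_left_mono norm_cis_minus_1_minus_linear_le)
    show "cmod (\<i> * of_real (real n * s - pi)) \<le> \<bar>real n * s - pi\<bar>"
      by (simp only: norm_mult norm_ii norm_of_real mult_1 order_refl)
  qed
  finally show ?thesis by (simp add: exp_eq_polar)
qed

lemma integral_ge_const_interval:
  fixes p :: "real \<Rightarrow> real"
  assumes "continuous_on {x..y} p" "x \<le> y" "\<And>t. t \<in> {x..y} \<Longrightarrow> c \<le> p t"
  shows "(y - x) * c \<le> integral {x..y} p"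
proof -
  have "integral {x..y} (\<lambda>_. c) \<le> integral {x..y} p"
    using assms by (intro integral_le integrable_continuous_interval) auto
  then show ?thesis using assms(2) by simp
qed

lemma integral_norm_diff_ge:
  fixes h :: "real \<Rightarrow> complex"
  assumes cont: "continuous_on {x..y} h" and d: "0 \<le> d" "x + d \<le> y - d"
    and near_u: "\<And>t. t \<in> {x..x+d} \<Longrightarrow> cmod (h t - u) \<le> e1"
    and near_v: "\<And>t. t \<in> {y-d..y} \<Longrightarrow> cmod (h t - v) \<le> e2"
  shows "d * (cmod (u - v) - e1 - e2) \<le> integral {x..y} (\<lambda>t. cmod (h t - m))"
proof -
  let ?p = "\<lambda>t. cmod (h t - m)"
  have p: "continuous_on {x'..y'} ?p" if "x \<le> x'" "y' \<le> y" for x' y'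
    using that by (intro continuous_intros continuous_on_subset[OF cont]) auto
  have int: "?p integrable_on {x'..y'}" if "x \<le> x'" "y' \<le> y" for x' y'
    using that by (intro integrable_continuous_interval p)
  have piece: "d * (cmod (w - m) - e) \<le> integral {x'..x'+d} ?p"
    if "x \<le> x'" "x' + d \<le> y" and near: "\<And>t. t \<in> {x'..x'+d} \<Longrightarrow> cmod (h t - w) \<le> e"
    for x' w e
  proof -
    have "cmod (w - m) - e \<le> ?p t" if "t \<in> {x'..x'+d}" for t
    proof -
      have "cmod (w - m) \<le> ?p t + cmod (h t - w)"
        using norm_triangle_ineq4[of "h t - m" "h t - w"] by simp
      with near[OF that] show ?thesis by linarith
    qed
    then show ?thesis using integral_ge_const_interval[OF p, of x' "x'+d"] that d by simp
  qed
  have "integral {x..x+d} ?p + integral {x+d..y} ?p = integral {x..y} ?p"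
    using d by (intro Henstock_Kurzweil_Integration.integral_combine int) auto
  moreover have "integral {x+d..y-d} ?p + integral {y-d..y} ?p = integral {x+d..y} ?p"
    using d by (intro Henstock_Kurzweil_Integration.integral_combine int) auto
  moreover have "0 \<le> integral {x+d..y-d} ?p"
    using d by (intro integral_nonneg int) auto
  moreover have "d * (cmod (u - m) - e1) \<le> integral {x..x+d} ?p"
    using d near_u by (intro piece) auto
  moreover have "d * (cmod (v - m) - e2) \<le> integral {y-d..y} ?p"
    using d near_v piece[of "y-d"] by simp
  moreover have "d * cmod (u - v) \<le> d * (cmod (u - m) + cmod (v - m))"
    using d norm_triangle_ineq4[of "u - m" "v - m"] by (intro mult_left_mono) auto
  ultimately show ?thesis by (simp add: algebra_simps)
qed

lemma arc_oscillation_le_2: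
  assumes "continuous_on (sphere 0 1) f" "\<And>z. z \<in> sphere 0 1 \<Longrightarrow> cmod (f z) \<le> 1" "l > 0"
  shows "arc_oscillation f b l \<le> 2"
proof -
  have cont: "continuous_on {b..b+l} (\<lambda>t. f (cis t))"
    by (rule continuous_on_compose2[OF assms(1) continuous_on_cis]) auto
  have bd: "cmod (f (cis t)) \<le> 1" for t by (rule assms(2)) simp
  have "cmod (integral {b..b+l} (\<lambda>t. f (cis t))) \<le> integral {b..b+l} (\<lambda>_. 1::real)"
    using cont bd by (intro integral_norm_bound_integral integrable_continuous_interval) auto
  then have mean: "cmod (arc_mean f b l) \<le> 1"
    using assms(3) by (simp add: arc_mean_def norm_divide)
  have "integral {b..b+l} (\<lambda>t. cmod (f (cis t) - arc_mean f b l)) \<le> integral {b..b+l} (\<lambda>_. 2::real)"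
  proof (rule integral_le)
    show "(\<lambda>t. cmod (f (cis t) - arc_mean f b l)) integrable_on {b..b+l}"
      by (intro integrable_continuous_interval continuous_intros cont)
    show "cmod (f (cis t) - arc_mean f b l) \<le> 2" for t
      using norm_triangle_ineq4[of "f (cis t)" "arc_mean f b l"] bd[of t] mean by linarith
  qed (intro integrable_continuous_interval continuous_on_const)
  then show ?thesis using assms(3) by (simp add: arc_oscillation_def divide_le_eq)
qed

definition peak_fun :: "complex \<Rightarrow> nat \<Rightarrow> complex \<Rightarrow> complex" where
  "peak_fun a n z = exp (of_nat n * (cnj a * z - 1))"

lemma norm_peak_fun: "cmod (peak_fun a n z) = exp (real n * (Re (cnj a * z) - 1))"
  unfolding peak_fun_def by (simp add: norm_exp_eq_Re)

lemma norm_peak_fun_le: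
  assumes "cmod a = 1" "cmod z \<le> 1"
  shows "cmod (peak_fun a n z) \<le> exp (- (cmod (z - a))\<^sup>2 / 2) ^ n"
proof -
  have "real n * (Re (cnj a * z) - 1) \<le> real n * (- (cmod (z - a))\<^sup>2 / 2)"
    using Re_cnj_mult_le[OF assms] by (intro mult_left_mono) auto
  then show ?thesis by (simp add: norm_peak_fun flip: exp_of_nat_mult)
qed

lemma norm_peak_fun_le_1: "cmod a = 1 \<Longrightarrow> cmod z \<le> 1 \<Longrightarrow> cmod (peak_fun a n z) \<le> 1"
  by (erule order_trans[OF norm_peak_fun_le]) (auto intro: power_le_one)

lemma peak_fun_at_peak: "cmod a = 1 \<Longrightarrow> peak_fun a n a = 1"
  unfolding peak_fun_def by (simp add: cnj_mult_self_eq_1)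

lemma peak_fun_tendsto_0:
  assumes "cmod a = 1" "cmod z \<le> 1" "z \<noteq> a"
  shows "(\<lambda>n. peak_fun a n z) \<longlonglongrightarrow> 0"
proof -
  define c where "c = exp (- (cmod (z - a))\<^sup>2 / 2)"
  have "c < 1" using assms(3) by (simp add: c_def)
  then have "(\<lambda>n. c ^ n) \<longlonglongrightarrow> 0" by (intro LIMSEQ_power_zero) (simp add: c_def)
  moreover have "eventually (\<lambda>n. cmod (peak_fun a n z) \<le> c ^ n) sequentially"
    unfolding c_def by (intro always_eventually allI norm_peak_fun_le[OF assms(1,2)])
  ultimately show ?thesis by (rule Lim_null_comparison[rotated])
qed

lemma peak_fun_holomorphic_on: "peak_fun a n holomorphic_on S"
  unfolding peak_fun_def by (intro holomorphic_intros)

lemma continuous_on_peak_fun: "continuous_on S (peak_fun a n)"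
  unfolding peak_fun_def by (intro continuous_intros)

lemma deriv_peak_fun: "deriv (peak_fun a n) z = of_nat n * cnj a * peak_fun a n z"
  unfolding peak_fun_def
  by (rule DERIV_imp_deriv) (auto intro!: derivative_eq_intros simp: algebra_simps)

lemma norm_peak_fun_scaleR: "cmod a = 1 \<Longrightarrow> cmod (peak_fun a n (r *\<^sub>R a)) = exp (real n * (r - 1))"
proof -
  assume "cmod a = 1"
  then have "cnj a * (r *\<^sub>R a) = of_real r"
    by (simp add: cnj_mult_self_eq_1 scaleR_conv_of_real)
  then show ?thesis by (simp add: norm_peak_fun)
qed

lemma Lq_norm_peak_fun_tendsto_0:
  assumes M: "finite_Borel_measure_on_closed_disc M" and a: "cmod a = 1" "measure M {a} = 0"
    and q: "q > 0"
  shows "(\<lambda>n. Lq_norm M q (peak_fun a n)) \<longlonglongrightarrow> 0"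
proof -
  have sets: "sets M = sets (restrict_space borel (cball (0::complex) 1))"
    using M unfolding finite_Borel_measure_on_closed_disc_def by auto
  interpret finite_measure M
    using M unfolding finite_Borel_measure_on_closed_disc_def by auto
  have space: "space M = cball 0 1"
    using sets_eq_imp_space_eq[OF sets] by (simp add: space_restrict_space)
  define s where "s n z = cmod (peak_fun a n z) powr q" for n z
  have meas: "s n \<in> borel_measurable M" for n
  proof -
    have "s n \<in> borel_measurable borel" unfolding s_def peak_fun_def by measurable
    then show ?thesis using measurable_restrict_space1 measurable_cong_sets[OF sets refl] by blast
  qed
  have "{a} \<in> sets M" unfolding sets using a(1) by (subst sets_restrict_space_iff) auto
  have "(\<lambda>n. integral\<^sup>L M (s n)) \<longlonglongrightarrow> integral\<^sup>L M (indicator {a})"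
  proof (rule integral_dominated_convergence[where w="\<lambda>_. 1"])
    show "AE z in M. (\<lambda>n. s n z) \<longlonglongrightarrow> indicator {a} z"
    proof (rule AE_I2)
      fix z assume z: "z \<in> space M"
      show "(\<lambda>n. s n z) \<longlonglongrightarrow> indicator {a} z"
      proof (cases "z = a")
        case False
        then have "(\<lambda>n. cmod (peak_fun a n z)) \<longlonglongrightarrow> 0"
          using a(1) z by (intro tendsto_norm_zero peak_fun_tendsto_0) (auto simp: space)
        then have "(\<lambda>n. cmod (peak_fun a n z) powr q) \<longlonglongrightarrow> 0"
          by (rule tendsto_zero_powrI[OF _ tendsto_const]) (use q in auto)
        then show ?thesis using False by (simp add: s_def)
      qed (use a(1) in \<open>simp add: s_def peak_fun_at_peak\<close>)
    qed
    show "AE z in M. norm (s n z) \<le> 1" for n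
      using norm_peak_fun_le_1[OF a(1)] q by (auto simp: s_def space powr_le1)
  qed (simp_all add: meas borel_measurable_indicator \<open>{a} \<in> sets M\<close>)
  also have "integral\<^sup>L M (indicator {a} :: complex \<Rightarrow> real) = 0"
    using \<open>{a} \<in> sets M\<close> a(2) by simp
  finally have "(\<lambda>n. integral\<^sup>L M (s n) powr (1 / q)) \<longlonglongrightarrow> 0"
    by (rule tendsto_zero_powrI[OF _ tendsto_const]) (use q in \<open>simp_all add: s_def\<close>)
  moreover have "Lq_norm M q (peak_fun a n) = integral\<^sup>L M (s n) powr (1 / q)" for n
  proof -
    have "enn2real (\<integral>\<^sup>+ z. ennreal (s n z) \<partial>M) = integral\<^sup>L M (s n)"
      by (rule enn2real_nn_integral_eq_integral[OF _ _ meas]) (simp_all add: s_def)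
    then show ?thesis by (simp add: Lq_norm_def s_def)
  qed
  ultimately show ?thesis by simp
qed

lemma not_reverse_Lq_estimate_if_peak_norms_bounded_below:
  assumes q: "q > 0" and c: "c > 0"
    and peak: "\<And>a n. cmod a = 1 \<Longrightarrow> n \<ge> K \<Longrightarrow> peak_fun a n \<in> X \<and> c \<le> N (peak_fun a n)"
  shows "\<not> reverse_Lq_estimate X N q"
proof
  assume "reverse_Lq_estimate X N q"
  then obtain M C where M: "finite_Borel_measure_on_closed_disc M" and "C > 0"
    and est: "\<And>f. f \<in> X \<inter> cont_closed_disc \<Longrightarrow> N f \<le> C * Lq_norm M q f"
    unfolding reverse_Lq_estimate_def by blast
  then interpret finite_measure M unfolding finite_Borel_measure_on_closed_disc_def by auto
  obtain a where a: "cmod a = 1" "measure M {a} = 0"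
    using exists_measure_singleton_eq_0[OF uncountable_unit_circle] by auto
  have "(\<lambda>n. C * Lq_norm M q (peak_fun a n)) \<longlonglongrightarrow> C * 0"
    by (intro tendsto_mult tendsto_const Lq_norm_peak_fun_tendsto_0[OF M a q])
  then have "eventually (\<lambda>n. C * Lq_norm M q (peak_fun a n) < c) sequentially"
    using c by (auto dest: order_tendstoD(2))
  then obtain n where n: "C * Lq_norm M q (peak_fun a n) < c" "n \<ge> K"
    using eventually_ge_at_top[of K] by (metis (mono_tags) eventually_at_top_linorder nle_le)
  have "peak_fun a n \<in> X \<inter> cont_closed_disc"
    using peak[OF a(1) n(2)] continuous_on_peak_fun by (simp add: cont_closed_disc_def)
  then have "N (peak_fun a n) \<le> C * Lq_norm M q (peak_fun a n)" by (rule est)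
  with n(1) peak[OF a(1) n(2)] show False by linarith
qed

lemma peak_fun_in_hinf_space: "cmod a = 1 \<Longrightarrow> peak_fun a n \<in> hinf_space"
  unfolding hinf_space_def
  by (auto intro!: bdd_aboveI[where M=1] norm_peak_fun_le_1 peak_fun_holomorphic_on)

lemma norm_peak_fun_radial:
  assumes "cmod a = 1" "n \<ge> 1"
  shows "(1 - 1 / real n) *\<^sub>R a \<in> ball 0 1"
    and "cmod (peak_fun a n ((1 - 1 / real n) *\<^sub>R a)) = exp (-1)"
  using assms by (simp_all add: norm_peak_fun_scaleR divide_le_eq_1)

lemma hinf_norm_peak_fun_ge:
  assumes "cmod a = 1" "n \<ge> 1"
  shows "exp (-1) \<le> hinf_norm (peak_fun a n)"
proof -
  have "bdd_above ((\<lambda>z. cmod (peak_fun a n z)) ` ball 0 1)"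
    using peak_fun_in_hinf_space[OF assms(1)] by (simp add: hinf_space_def)
  from cSUP_upper[OF norm_peak_fun_radial(1)[OF assms] this] show ?thesis
    by (simp add: hinf_norm_def norm_peak_fun_radial(2)[OF assms])
qed

lemma peak_fun_in_bloch_space:
  assumes "cmod a = 1"
  shows "peak_fun a n \<in> bloch_space"
proof -
  have "(1 - (cmod z)\<^sup>2) * cmod (deriv (peak_fun a n) z) \<le> real n" if "cmod z < 1" for z
  proof -
    have "cmod (deriv (peak_fun a n) z) \<le> real n"
      using norm_peak_fun_le_1[OF assms, of z n] that
      by (simp add: deriv_peak_fun norm_mult assms mult_left_le)
    moreover have "0 \<le> 1 - (cmod z)\<^sup>2" "1 - (cmod z)\<^sup>2 \<le> 1"
      using that by (simp_all add: power_le_one)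
    ultimately show ?thesis by (meson mult_left_le_one_le norm_ge_zero order_trans)
  qed
  then show ?thesis
    unfolding bloch_space_def by (auto intro!: bdd_aboveI peak_fun_holomorphic_on)
qed

lemma bloch_norm_peak_fun_ge:
  assumes "cmod a = 1" "n \<ge> 1"
  shows "exp (-1) \<le> bloch_norm (peak_fun a n)"
proof -
  define w where "w = (1 - 1 / real n) *\<^sub>R a"
  have w: "w \<in> ball 0 1" unfolding w_def by (rule norm_peak_fun_radial(1)[OF assms])
  have eq: "(1 - (cmod w)\<^sup>2) * cmod (deriv (peak_fun a n) w) = (2 - 1 / real n) * exp (-1)"
    using assms norm_peak_fun_radial(2)[OF assms]
    by (simp add: w_def deriv_peak_fun norm_mult divide_le_eq_1 power2_eq_square field_simps)
  have bdd: "bdd_above ((\<lambda>z. (1 - (cmod z)\<^sup>2) * cmod (deriv (peak_fun a n) z)) ` ball 0 1)"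
    using peak_fun_in_bloch_space[OF assms(1)] by (simp add: bloch_space_def)
  have "(2 - 1 / real n) * exp (-1) \<le> bloch_seminorm (peak_fun a n)"
    using cSUP_upper[OF w bdd] eq by (simp add: bloch_seminorm_def)
  moreover have "exp (-1) \<le> (2 - 1 / real n) * exp (-1)"
    using assms(2) by (simp add: field_simps)
  ultimately show ?thesis
    unfolding bloch_norm_def using norm_ge_zero[of "peak_fun a n 0"] by linarith
qed

lemma peak_fun_cis:
  assumes "cmod a = 1"
  shows "peak_fun a n (cis (Arg a + s)) = exp (of_nat n * (cis s - 1))"
proof -
  have "a \<noteq> 0" using assms by auto
  then have "cis (Arg a) = a" using assms by (simp add: cis_Arg Complex.sgn_eq)
  then have "cnj a * cis (Arg a + s) = cis s"
    by (metis add_minus_cancel cis_cnj cis_mult)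
  then show ?thesis by (simp add: peak_fun_def)
qed

lemma peak_fun_in_bmoa_cont:
  assumes "cmod a = 1"
  shows "peak_fun a n \<in> bmoa_cont"
proof -
  have "arc_oscillation (peak_fun a n) b l \<le> 2" if "(b, l) \<in> arcs" for b l
    using that norm_peak_fun_le_1[OF assms]
    by (intro arc_oscillation_le_2 continuous_on_peak_fun) (auto simp: arcs_def)
  then show ?thesis
    unfolding bmoa_cont_def
    by (auto intro!: bdd_aboveI peak_fun_holomorphic_on continuous_on_peak_fun)
qed

lemma arc_oscillation_peak_fun_ge:
  assumes a: "cmod a = 1" and n: "n \<ge> 100" and l: "l = pi / real n"
  shows "1/12 \<le> arc_oscillation (peak_fun a n) (Arg a) l"
proof -
  from l n have l: "l > 0" "real n * l = pi" by simp_all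
  let ?h = "\<lambda>t. peak_fun a n (cis t)"
  have h: "?h t = exp (of_nat n * (cis (t - Arg a) - 1))" for t
    using peak_fun_cis[OF a, of n "t - Arg a"] by simp
  have near_1: "cmod (?h t - 1) \<le> pi / 6" if "t \<in> {Arg a..Arg a + l/6}" for t
  proof -
    have "real n * \<bar>t - Arg a\<bar> \<le> real n * (l / 6)"
      using that by (intro mult_left_mono) auto
    then show ?thesis
      using norm_exp_scaled_cis_minus_1_sub_1_le[of n "t - Arg a"] l by (simp add: h)
  qed
  have near_minus_1: "cmod (?h t - (-1)) \<le> pi / 6 + 1 / 6" if "t \<in> {Arg a + l - l/6..Arg a + l}" for t
  proof -
    define s where "s = t - Arg a"
    have "real n * (5 * l / 6) \<le> real n * s" "real n * s \<le> real n * l"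
      using that by (intro mult_left_mono; simp add: s_def)+
    then have ns: "5 * pi / 6 \<le> real n * s" "real n * s \<le> pi"
      using l by simp_all
    have "real n * s\<^sup>2 * real n = (real n * s)\<^sup>2" by (simp add: power2_eq_square)
    also have "\<dots> \<le> pi\<^sup>2" using ns pi_gt_zero by (intro power_mono) auto
    also have "\<dots> \<le> 1 / 6 * real n"
      using n pi_less_4 by (intro order_trans[OF power_mono[of pi 4]]) auto
    finally have "real n * s\<^sup>2 \<le> 1 / 6" by (rule mult_right_le_imp_le) (use n in auto)
    then show ?thesis
      using norm_exp_scaled_cis_minus_1_add_1_le[of n s] ns by (simp add: h s_def)
  qed
  have "l / 12 \<le> l / 6 * (cmod (1 - (-1::complex)) - pi / 6 - (pi / 6 + 1 / 6))"
  proof -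
    have "1 / 2 \<le> cmod (1 - (-1::complex)) - pi / 6 - (pi / 6 + 1 / 6)" using pi_less_4 by simp
    from mult_left_mono[OF this, of "l / 6"] l show ?thesis by simp
  qed
  also have "\<dots> \<le> integral {Arg a..Arg a + l} (\<lambda>t. cmod (?h t - arc_mean (peak_fun a n) (Arg a) l))"
    using l near_1 near_minus_1
    by (intro integral_norm_diff_ge continuous_on_compose2[OF continuous_on_peak_fun continuous_on_cis]) auto
  finally show ?thesis using l by (simp add: arc_oscillation_def field_simps)
qed

lemma bmoa_norm_peak_fun_ge:
  assumes a: "cmod a = 1" and n: "n \<ge> 100"
  shows "1/12 \<le> bmoa_norm (peak_fun a n)"
proof -
  have "(Arg a, pi / real n) \<in> arcs" using n by (simp add: arcs_def field_simps)
  moreover have "bdd_above ((\<lambda>(b, l). arc_oscillation (peak_fun a n) b l) ` arcs)"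
    using peak_fun_in_bmoa_cont[OF a] by (simp add: bmoa_cont_def)
  ultimately have "arc_oscillation (peak_fun a n) (Arg a) (pi / real n) \<le> bmoa_seminorm (peak_fun a n)"
    unfolding bmoa_seminorm_def using cSUP_upper by fastforce
  with arc_oscillation_peak_fun_ge[OF a n refl] show ?thesis
    unfolding bmoa_norm_def using norm_ge_zero[of "peak_fun a n 0"] by linarith
qed

theorem theorem4p1:
  fixes q :: real
  assumes "q > 0"
  shows "\<not> reverse_Lq_estimate bloch_space bloch_norm q
       \<and> \<not> reverse_Lq_estimate bmoa_cont bmoa_norm q
       \<and> \<not> reverse_Lq_estimate hinf_space hinf_norm q"
proof (intro conjI)
  show "\<not> reverse_Lq_estimate bloch_space bloch_norm q"
    by (rule not_reverse_Lq_estimate_if_peak_norms_bounded_below[OF assms, where c="exp (-1)" and K=1])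
       (simp, blast intro: peak_fun_in_bloch_space bloch_norm_peak_fun_ge)
  show "\<not> reverse_Lq_estimate bmoa_cont bmoa_norm q"
    by (rule not_reverse_Lq_estimate_if_peak_norms_bounded_below[OF assms, where c="1/12" and K=100])
       (simp, blast intro: peak_fun_in_bmoa_cont bmoa_norm_peak_fun_ge)
  show "\<not> reverse_Lq_estimate hinf_space hinf_norm q"
    by (rule not_reverse_Lq_estimate_if_peak_norms_bounded_below[OF assms, where c="exp (-1)" and K=1])
       (simp, blast intro: peak_fun_in_hinf_space hinf_norm_peak_fun_ge)
qed

end
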